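(* Fix $1<p,q<\infty$ with $\frac1p+\frac1q=1$, an integer $r>1$, and put $s=r^{1/p}$. Then for every $x\in\mathcal N_s^{(p)}$ we have $\|x\|_p^p\le |x|_{p,r}$.
   Context: For $\alpha>0$ let $C_\alpha=\{\pm\alpha^j: j\in\mathbb Z\}\cup\{0\}$, $\mathcal N_\alpha=\{x\in c_{00}: x(i)\in C_\alpha \text{ for all } i\}$ ($c_{00}$ = finitely supported real sequences), and $\mathcal N_\alpha^{(p)}=\mathcal N_\alpha\cap B_{\ell_p}$. Let $K^{\mathcal M}_{q,r}$ be the smallest subset of $c_{00}$ containing all $\pm e_n$ and such that whenever $y_1,\dots,y_l\in K^{\mathcal M}_{q,r}$, $l\le r$, have pairwise disjoint supports, then $r^{-1/q}(y_1+\dots+y_l)\in K^{\mathcal M}_{q,r}$. Define $|x|_{p,r}=\sup\{\sum_i x(i)y(i): y\in K^{\mathcal M}_{q,r}\}$. *)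

theory Defs
  imports Complex_Main
begin

definition supp :: "(nat \<Rightarrow> real) \<Rightarrow> nat set" where
  "supp x = {i. x i \<noteq> 0}"

definition c00 :: "(nat \<Rightarrow> real) set" where
  "c00 = {x. finite (supp x)}"

definition C_set :: "real \<Rightarrow> real set" where
  "C_set \<alpha> = {t. t = 0 \<or> (\<exists>j::int. t = \<alpha> powi j \<or> t = - (\<alpha> powi j))}"

definition N_set :: "real \<Rightarrow> (nat \<Rightarrow> real) set" where
  "N_set \<alpha> = {x \<in> c00. \<forall>i. x i \<in> C_set \<alpha>}"

definition lp_pow :: "real \<Rightarrow> (nat \<Rightarrow> real) \<Rightarrow> real" where
  "lp_pow p x = (\<Sum>i\<in>supp x. \<bar>x i\<bar> powr p)"

definition lp_ball :: "real \<Rightarrow> (nat \<Rightarrow> real) set" where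
  "lp_ball p = {x \<in> c00. lp_pow p x \<le> 1}"

definition N_p :: "real \<Rightarrow> real \<Rightarrow> (nat \<Rightarrow> real) set" where
  "N_p \<alpha> p = N_set \<alpha> \<inter> lp_ball p"

definition unit_vec :: "nat \<Rightarrow> nat \<Rightarrow> real" where
  "unit_vec n = (\<lambda>i. if i = n then 1 else 0)"

inductive_set K_M :: "real \<Rightarrow> nat \<Rightarrow> (nat \<Rightarrow> real) set" for q :: real and r :: nat where
  unit_pos: "unit_vec n \<in> K_M q r"
| unit_neg: "(\<lambda>i. - unit_vec n i) \<in> K_M q r"
| comb: "\<lbrakk> 1 \<le> length ys; length ys \<le> r; \<forall>y\<in>set ys. y \<in> K_M q r;
          \<forall>a<length ys. \<forall>b<length ys. a \<noteq> b \<longrightarrow> (\<forall>i. (ys ! a) i = 0 \<or> (ys ! b) i = 0) \<rbrakk>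
         \<Longrightarrow> (\<lambda>i. real r powr (- 1 / q) * (\<Sum>y\<leftarrow>ys. y i)) \<in> K_M q r"

text \<open>The norm |x|_{p,r}, where q is the conjugate exponent of p (passed explicitly).\<close>
definition pr_norm :: "real \<Rightarrow> nat \<Rightarrow> (nat \<Rightarrow> real) \<Rightarrow> real" where
  "pr_norm q r x = Sup {(\<Sum>i\<in>supp x. x i * y i) | y. y \<in> K_M q r}"

end

(*
  Every nonzero entry of x is +-r^(-k/p) for some natural k, so |x i|^p = r^(-k i) and
  lp_pow p x <= 1 is Kraft's inequality for the depths k i.  Hence the signed unit vectors
  sgn (x i) e_i can be hung as leaves at depth k i of an r-ary tree; building the tree bottom-up,
  by repeatedly merging at most r deepest nodes into a parent one level higher with the rule that
  defines K_M, produces y in K_M with y i = sgn (x i) r^(-k i/q) = sgn (x i) |x i|^(p-1), and then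
  sum x i y i = lp_pow p x.
*)

theory Submission
  imports Defs "HOL-Library.Multiset"
begin

definition disjoint_supports :: "(nat \<Rightarrow> real) multiset \<Rightarrow> bool" where
  "disjoint_supports Y \<longleftrightarrow> (\<forall>i. size {#y \<in># Y. y i \<noteq> 0#} \<le> 1)"

lemma disjoint_supports_mono:
  "A \<subseteq># B \<Longrightarrow> disjoint_supports B \<Longrightarrow> disjoint_supports A"
  unfolding disjoint_supports_def
  by (meson multiset_filter_mono size_mset_mono order_trans)

lemma disjoint_supports_nth:
  assumes "disjoint_supports (mset ys)" "a < length ys" "b < length ys" "a \<noteq> b"
  shows "(ys ! a) i = 0 \<or> (ys ! b) i = 0"
proof (rule ccontr)
  assume "\<not> ?thesis"
  then have "{a, b} \<subseteq> {j. j < length ys \<and> (ys ! j) i \<noteq> 0}"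
    using assms(2,3) by auto
  then have "card {a, b} \<le> card {j. j < length ys \<and> (ys ! j) i \<noteq> 0}"
    by (rule card_mono[rotated]) auto
  then have "2 \<le> length (filter (\<lambda>y. y i \<noteq> 0) ys)"
    using assms(4) by (simp add: length_filter_conv_card)
  moreover have "length (filter (\<lambda>y. y i \<noteq> 0) ys) \<le> 1"
    using assms(1) unfolding disjoint_supports_def by (metis mset_filter size_mset)
  ultimately show False by simp
qed

lemma disjoint_supports_merge:
  assumes "disjoint_supports (A + B)"
  shows "disjoint_supports (add_mset (\<lambda>i. c * (\<Sum>y\<in>#A. y i)) B)"
  unfolding disjoint_supports_def
proof
  fix i
  have split: "size {#y \<in># A. y i \<noteq> 0#} + size {#y \<in># B. y i \<noteq> 0#} \<le> 1"
    using assms unfolding disjoint_supports_def by (metis filter_union_mset size_union)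
  show "size {#y \<in># add_mset (\<lambda>i. c * (\<Sum>y\<in>#A. y i)) B. y i \<noteq> 0#} \<le> 1"
  proof (cases "(\<Sum>y\<in>#A. y i) = 0")
    case True
    then show ?thesis using split by simp
  next
    case False
    then obtain y where "y \<in># A" "y i \<noteq> 0"
      using sum_mset.neutral[of "image_mset (\<lambda>y. y i) A"] by auto
    then have "y \<in># {#y \<in># A. y i \<noteq> 0#}" by simp
    then have "size {#y \<in># A. y i \<noteq> 0#} \<noteq> 0" by (metis size_eq_0_iff_empty empty_iff set_mset_empty)
    moreover have "size {#y \<in># add_mset (\<lambda>i. c * (\<Sum>y\<in>#A. y i)) B. y i \<noteq> 0#}
        \<le> Suc (size {#y \<in># B. y i \<noteq> 0#})"
      by simp
    ultimately show ?thesis using split by linarith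
  qed
qed

lemma K_M_comb_mset:
  assumes "C \<noteq> {#}" "size C \<le> r" "\<forall>y\<in>#C. y \<in> K_M q r" "disjoint_supports C"
  shows "(\<lambda>i. real r powr (- 1 / q) * (\<Sum>y\<in>#C. y i)) \<in> K_M q r"
proof -
  obtain ys where ys: "mset ys = C" using ex_mset by blast
  have "(\<lambda>i. real r powr (- 1 / q) * (\<Sum>y\<leftarrow>ys. y i)) \<in> K_M q r"
    using assms ys disjoint_supports_nth[of ys]
    by (intro K_M.comb) (auto simp: Suc_le_eq)
  moreover have "(\<Sum>y\<in>#C. y i) = (\<Sum>y\<leftarrow>ys. y i)" for i
    by (metis ys mset_map sum_mset_sum_list)
  ultimately show ?thesis by simp
qed

lemma split_off_deepest:
  fixes M :: "('a \<times> nat) multiset"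
  assumes "0 < r" "\<forall>p\<in>#M. snd p \<le> m" "\<exists>p\<in>#M. snd p = m"
  obtains C R where "M = C + R" "C \<noteq> {#}" "size C \<le> r" "\<forall>p\<in>#C. snd p = m"
    "size C = r \<or> (\<forall>p\<in>#R. snd p < m)"
proof -
  obtain ds where ds: "mset ds = {#p \<in># M. snd p = m#}" using ex_mset by blast
  define C where "C = mset (take r ds)"
  have "C \<subseteq># mset ds"
  proof -
    have "mset ds = C + mset (drop r ds)"
      unfolding C_def by (metis append_take_drop_id mset_append)
    then show ?thesis by simp
  qed
  then have "C \<subseteq># M" unfolding ds using multiset_filter_subset subset_mset.order_trans by blast
  then have "M = C + (M - C)" by simp
  moreover have "ds \<noteq> []" using assms(3) ds by fastforce
  then have "C \<noteq> {#}" using assms(1) unfolding C_def by simp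
  moreover have "size C \<le> r" unfolding C_def by simp
  moreover have "\<forall>p\<in>#C. snd p = m"
    using mset_subset_eqD[OF \<open>C \<subseteq># mset ds\<close>] by (auto simp: ds)
  moreover have "size C = r \<or> (\<forall>p\<in>#M - C. snd p < m)"
  proof (cases "length ds \<le> r")
    case True
    then have "C = {#p \<in># M. snd p = m#}" unfolding C_def using ds by simp
    then have "M - C = {#p \<in># M. snd p \<noteq> m#}"
      using multiset_partition[of M "\<lambda>p. snd p = m"] by (metis add_diff_cancel_left')
    then show ?thesis using assms(2) by (simp add: order_less_le)
  next
    case False
    then show ?thesis unfolding C_def by simp
  qed
  ultimately show ?thesis by (rule that)
qed

(* If fewer than r nodes are merged, all remaining depths are below m, so the remaining Kraft sum
   is a multiple of r^-(m-1); being strictly below 1, it leaves room for the new parent. *)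
lemma kraft_sum_merge_le:
  fixes r c m :: nat and ks :: "nat multiset"
  assumes "0 < r" "0 < c" "0 < m" "c = r \<or> (\<forall>k\<in>#ks. k < m)"
    and kraft: "real c / real r ^ m + (\<Sum>k\<in>#ks. 1 / real r ^ k) \<le> 1"
  shows "1 / real r ^ (m - 1) + (\<Sum>k\<in>#ks. 1 / real r ^ k) \<le> 1"
proof -
  define P where "P = real r ^ (m - 1)"
  define S where "S = (\<Sum>k\<in>#ks. 1 / real r ^ k)"
  have P_pos: "0 < P" using assms(1) unfolding P_def by simp
  have rm: "real r ^ m = real r * P"
    unfolding P_def using assms(3) by (simp add: power_eq_if)
  from assms(4) show ?thesis
  proof
    assume "c = r"
    then show ?thesis using kraft assms(1) P_pos unfolding rm P_def by simp
  next
    assume shallow: "\<forall>k\<in>#ks. k < m"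
    define N where "N = (\<Sum>k\<in>#ks. r ^ (m - 1 - k))"
    have "S * P = (\<Sum>k\<in>#ks. real r ^ (m - 1 - k))"
      unfolding S_def sum_mset_distrib_right P_def
    proof (intro arg_cong[where f = sum_mset] image_mset_cong)
      fix k assume "k \<in># ks"
      then have "k \<le> m - 1" using shallow by fastforce
      then show "1 / real r ^ k * real r ^ (m - 1) = real r ^ (m - 1 - k)"
        using power_diff[of "real r" k "m - 1"] assms(1) by simp
    qed
    then have SP: "S * P = real N" unfolding N_def by (simp add: image_mset.compositionality o_def)
    have "(real c / real r ^ m + S) * P \<le> 1 * P"
      using kraft P_pos unfolding S_def by (intro mult_right_mono) auto
    moreover have "(real c / real r ^ m + S) * P = real c / real r + real N"
      using P_pos SP unfolding rm by (simp add: distrib_right)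
    moreover have "0 < real c / real r" using assms(1,2) by simp
    ultimately have "real N < P" by linarith
    then have "N < r ^ (m - 1)" unfolding P_def by (metis of_nat_less_iff of_nat_power)
    then have "real (Suc N) \<le> real (r ^ (m - 1))" by (simp only: of_nat_le_iff Suc_le_eq)
    then have "1 + real N \<le> P" unfolding P_def by simp
    moreover have "1 / P + S = (1 + real N) / P" using SP P_pos by (simp add: field_simps)
    ultimately show ?thesis using P_pos unfolding S_def P_def by simp
  qed
qed

(* A pair (y, k) is a node y of K_M placed at depth k of an r-ary tree; the depth-weighted sum is
   the vector represented by the root once the tree is completed. *)
definition depth_weighted_sum :: "real \<Rightarrow> nat \<Rightarrow> ((nat \<Rightarrow> real) \<times> nat) multiset \<Rightarrow> nat \<Rightarrow> real" where
  "depth_weighted_sum q r M = (\<lambda>i. \<Sum>(y, k)\<in>#M. real r powr (- real k / q) * y i)"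

definition kraft_admissible :: "real \<Rightarrow> nat \<Rightarrow> ((nat \<Rightarrow> real) \<times> nat) multiset \<Rightarrow> bool" where
  "kraft_admissible q r M \<longleftrightarrow> M \<noteq> {#} \<and> (\<forall>(y, k)\<in>#M. y \<in> K_M q r)
    \<and> disjoint_supports (image_mset fst M) \<and> (\<Sum>k\<in>#image_mset snd M. 1 / real r ^ k) \<le> 1"

definition parent_node :: "real \<Rightarrow> nat \<Rightarrow> ((nat \<Rightarrow> real) \<times> nat) multiset \<Rightarrow> nat \<Rightarrow> (nat \<Rightarrow> real) \<times> nat" where
  "parent_node q r C m = ((\<lambda>i. real r powr (- 1 / q) * (\<Sum>y\<in>#image_mset fst C. y i)), m - 1)"

lemma image_mset_const_snd:
  assumes "\<forall>p\<in>#C. snd p = m"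
  shows "image_mset (\<lambda>p. f (fst p) (snd p)) C = image_mset (\<lambda>y. f y m) (image_mset fst C)"
  using assms by (induction C) auto

lemma depth_weighted_sum_parent_node:
  assumes "\<forall>p\<in>#C. snd p = m" "0 < m"
  shows "depth_weighted_sum q r (add_mset (parent_node q r C m) R) = depth_weighted_sum q r (C + R)"
proof
  fix i
  have "- real (m - 1) / q + - 1 / q = - real m / q"
    using assms(2) by (cases "q = 0") (simp_all add: of_nat_diff field_simps)
  then have "real r powr (- real (m - 1) / q) * real r powr (- 1 / q) = real r powr (- real m / q)"
    by (simp only: powr_add[symmetric])
  moreover have "(\<Sum>(y, k)\<in>#C. real r powr (- real k / q) * y i)
      = (\<Sum>y\<in>#image_mset fst C. real r powr (- real m / q) * y i)"
    using image_mset_const_snd[OF assms(1), of "\<lambda>y k. real r powr (- real k / q) * y i"]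
    by (simp add: case_prod_unfold)
  ultimately show "depth_weighted_sum q r (add_mset (parent_node q r C m) R) i
      = depth_weighted_sum q r (C + R) i"
    unfolding depth_weighted_sum_def parent_node_def
    by (simp add: sum_mset_distrib_left mult.assoc[symmetric])
qed

lemma kraft_admissible_parent_node:
  assumes adm: "kraft_admissible q r (C + R)" and "0 < r"
    and C: "C \<noteq> {#}" "size C \<le> r" "\<forall>p\<in>#C. snd p = m" and "0 < m"
    and full_or_last: "size C = r \<or> (\<forall>p\<in>#R. snd p < m)"
  shows "kraft_admissible q r (add_mset (parent_node q r C m) R)"
proof -
  from adm have K: "\<forall>(y, k)\<in>#C + R. y \<in> K_M q r"
    and disj: "disjoint_supports (image_mset fst C + image_mset fst R)"
    and kraft: "(\<Sum>k\<in>#image_mset snd (C + R). 1 / real r ^ k) \<le> 1"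
    unfolding kraft_admissible_def by auto
  have "disjoint_supports (image_mset fst C)"
    using disj disjoint_supports_mono[OF mset_subset_eq_add_left] by blast
  then have "fst (parent_node q r C m) \<in> K_M q r"
    unfolding parent_node_def fst_conv using C K by (intro K_M_comb_mset) auto
  moreover have "disjoint_supports (image_mset fst (add_mset (parent_node q r C m) R))"
    using disjoint_supports_merge[OF disj] unfolding parent_node_def by simp
  moreover have "(\<Sum>k\<in>#image_mset snd (add_mset (parent_node q r C m) R). 1 / real r ^ k) \<le> 1"
  proof -
    have "image_mset snd C = replicate_mset (size C) m"
      using image_mset_const_snd[OF C(3), of "\<lambda>_ k. k"] by (simp add: image_mset_const_eq)
    then have "real (size C) / real r ^ m + (\<Sum>k\<in>#image_mset snd R. 1 / real r ^ k) \<le> 1"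
      using kraft by simp
    moreover have "size C = r \<or> (\<forall>k\<in>#image_mset snd R. k < m)"
      using full_or_last by auto
    moreover have "0 < size C" using C(1) by (simp add: nonempty_has_size)
    ultimately show ?thesis
      using kraft_sum_merge_le[OF \<open>0 < r\<close> _ \<open>0 < m\<close>] unfolding parent_node_def by simp
  qed
  ultimately show ?thesis using K unfolding kraft_admissible_def by auto
qed

lemma kraft_admissible_merge_deepest:
  assumes adm: "kraft_admissible q r M" and "0 < r"
    and m: "m = Max (snd ` set_mset M)" "0 < m"
  obtains M' where "kraft_admissible q r M'" "\<Sum>\<^sub># (image_mset snd M') < \<Sum>\<^sub># (image_mset snd M)"
    "depth_weighted_sum q r M' = depth_weighted_sum q r M"
proof -
  have M_ne: "M \<noteq> {#}" using adm unfolding kraft_admissible_def by simp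
  have "\<forall>p\<in>#M. snd p \<le> m" unfolding m(1) by simp
  moreover have "m \<in> snd ` set_mset M" unfolding m(1) using M_ne by simp
  then have "\<exists>p\<in>#M. snd p = m" by auto
  ultimately obtain C R where M: "M = C + R" and C: "C \<noteq> {#}" "size C \<le> r" "\<forall>p\<in>#C. snd p = m"
    and full_or_last: "size C = r \<or> (\<forall>p\<in>#R. snd p < m)"
    using split_off_deepest[OF \<open>0 < r\<close>] by blast
  define M' where "M' = add_mset (parent_node q r C m) R"
  have "\<Sum>\<^sub># (image_mset snd M) = size C * m + \<Sum>\<^sub># (image_mset snd R)"
    using image_mset_const_snd[OF C(3), of "\<lambda>_ k. k"] unfolding M by (simp add: image_mset_const_eq)
  moreover have "\<Sum>\<^sub># (image_mset snd M') = (m - 1) + \<Sum>\<^sub># (image_mset snd R)"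
    unfolding M'_def parent_node_def by simp
  moreover have "m \<le> size C * m" using C(1) by (simp add: nonempty_has_size)
  ultimately have "\<Sum>\<^sub># (image_mset snd M') < \<Sum>\<^sub># (image_mset snd M)"
    using m(2) by linarith
  moreover have "kraft_admissible q r M'"
    unfolding M'_def using kraft_admissible_parent_node adm \<open>0 < r\<close> C m(2) full_or_last
    unfolding M by blast
  moreover have "depth_weighted_sum q r M' = depth_weighted_sum q r M"
    unfolding M'_def M using depth_weighted_sum_parent_node[OF C(3) m(2)] .
  ultimately show ?thesis using that by blast
qed

lemma depth_weighted_sum_in_K_M:
  assumes "kraft_admissible q r M" "0 < r"
  shows "depth_weighted_sum q r M \<in> K_M q r"
  using assms(1)
proof (induction "\<Sum>\<^sub># (image_mset snd M)" arbitrary: M rule: less_induct)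
  case less
  define m where "m = Max (snd ` set_mset M)"
  show ?case
  proof (cases "m = 0")
    case True
    have M_ne: "M \<noteq> {#}" using less.prems unfolding kraft_admissible_def by simp
    have "\<forall>p\<in>#M. snd p \<le> m" unfolding m_def by simp
    then have depth_0: "\<forall>p\<in>#M. snd p = 0" using True by simp
    then have "image_mset snd M = replicate_mset (size M) 0"
      using image_mset_const_snd[OF depth_0, of "\<lambda>_ k. k"] by (simp add: image_mset_const_eq)
    then have "size M \<le> 1" using less.prems unfolding kraft_admissible_def by simp
    then obtain p where "M = {#p#}" using M_ne size_1_singleton_mset by (fastforce simp: le_Suc_eq)
    then show ?thesis
      using less.prems depth_0 assms(2) unfolding kraft_admissible_def depth_weighted_sum_def
      by (auto simp: case_prod_unfold)
  next
    case False
    then obtain M' where "kraft_admissible q r M'" "\<Sum>\<^sub># (image_mset snd M') < \<Sum>\<^sub># (image_mset snd M)"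
      "depth_weighted_sum q r M' = depth_weighted_sum q r M"
      using kraft_admissible_merge_deepest[OF less.prems assms(2) m_def] by blast
    then show ?thesis using less.hyps by metis
  qed
qed

definition signed_unit_family :: "(nat \<Rightarrow> real) \<Rightarrow> (nat \<Rightarrow> nat) \<Rightarrow> nat set \<Rightarrow> ((nat \<Rightarrow> real) \<times> nat) multiset" where
  "signed_unit_family a k S = image_mset (\<lambda>i. ((\<lambda>t. sgn (a i) * unit_vec i t), k i)) (mset_set S)"

lemma sgn_unit_vec_in_K_M:
  assumes "a \<noteq> 0"
  shows "(\<lambda>t. sgn a * unit_vec i t) \<in> K_M q r"
proof (cases "a > 0")
  case True
  then show ?thesis using K_M.unit_pos[of i q r] by simp
next
  case False
  then show ?thesis using assms K_M.unit_neg[of i q r] by simp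
qed

lemma kraft_admissible_signed_unit_family:
  assumes "finite S" "S \<noteq> {}" "\<forall>i\<in>S. a i \<noteq> 0" "(\<Sum>i\<in>S. 1 / real r ^ k i) \<le> 1"
  shows "kraft_admissible q r (signed_unit_family a k S)"
  unfolding kraft_admissible_def
proof (intro conjI)
  show "signed_unit_family a k S \<noteq> {#}"
    unfolding signed_unit_family_def using assms(1,2) by (simp add: mset_set_empty_iff)
  show "\<forall>(y, d)\<in>#signed_unit_family a k S. y \<in> K_M q r"
    unfolding signed_unit_family_def using assms(1,3) by (auto intro: sgn_unit_vec_in_K_M)
  show "disjoint_supports (image_mset fst (signed_unit_family a k S))"
    unfolding disjoint_supports_def
  proof
    fix t
    have "size {#y \<in># image_mset fst (signed_unit_family a k S). y t \<noteq> 0#}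
        = card {i \<in> S. sgn (a i) * unit_vec i t \<noteq> 0}"
      unfolding signed_unit_family_def using assms(1) by (simp add: filter_mset_image_mset)
    also have "\<dots> \<le> card {t}"
      by (rule card_mono) (auto simp: unit_vec_def split: if_splits)
    finally show "size {#y \<in># image_mset fst (signed_unit_family a k S). y t \<noteq> 0#} \<le> 1"
      by simp
  qed
  show "(\<Sum>n\<in>#image_mset snd (signed_unit_family a k S). 1 / real r ^ n) \<le> 1"
    using assms(4) unfolding signed_unit_family_def sum_unfold_sum_mset
    by (simp add: image_mset.compositionality o_def)
qed

lemma depth_weighted_sum_signed_unit_family:
  assumes "finite S" "t \<in> S"
  shows "depth_weighted_sum q r (signed_unit_family a k S) t = real r powr (- real (k t) / q) * sgn (a t)"
proof -
  have "depth_weighted_sum q r (signed_unit_family a k S) t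
      = (\<Sum>i\<in>S. real r powr (- real (k i) / q) * (sgn (a i) * unit_vec i t))"
    unfolding depth_weighted_sum_def signed_unit_family_def sum_unfold_sum_mset
    by (simp add: image_mset.compositionality o_def)
  also have "\<dots> = (\<Sum>i\<in>S. if t = i then real r powr (- real (k i) / q) * sgn (a i) else 0)"
    by (rule sum.cong) (auto simp: unit_vec_def)
  also have "\<dots> = real r powr (- real (k t) / q) * sgn (a t)"
    using assms by (simp add: sum.delta')
  finally show ?thesis .
qed

lemma N_p_abs_eq_powr:
  fixes b p :: real
  assumes x: "x \<in> N_p (b powr (1 / p)) p" and "1 < b" "0 < p"
  obtains k :: "nat \<Rightarrow> nat" where "\<forall>i\<in>supp x. \<bar>x i\<bar> = b powr (- real (k i) / p)"
proof -
  have fin: "finite (supp x)" and x_C: "\<forall>i. x i \<in> C_set (b powr (1 / p))" and lp: "lp_pow p x \<le> 1"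
    using x unfolding N_p_def N_set_def lp_ball_def c00_def by auto
  have "\<exists>n::nat. \<bar>x i\<bar> = b powr (- real n / p)" if i: "i \<in> supp x" for i
  proof -
    have "x i \<noteq> 0" using i unfolding supp_def by simp
    moreover have "0 < b powr (1 / p)" using assms(2) by simp
    ultimately obtain j :: int where "\<bar>x i\<bar> = (b powr (1 / p)) powi j"
      using x_C unfolding C_set_def by auto
    also have "\<dots> = (b powr (1 / p)) powr real_of_int j"
      using assms(2) by (simp add: powr_real_of_int'[symmetric])
    also have "\<dots> = b powr (real_of_int j / p)"
      by (simp add: powr_powr)
    finally have x_i: "\<bar>x i\<bar> = b powr (real_of_int j / p)" .
    have "b powr real_of_int j = \<bar>x i\<bar> powr p"
      unfolding x_i using assms(3) by (simp add: powr_powr)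
    also have "\<dots> \<le> lp_pow p x"
      unfolding lp_pow_def using i fin by (intro member_le_sum) auto
    finally have "b powr real_of_int j \<le> b powr 0" using lp by simp
    then have "real_of_int j \<le> 0" using assms(2) by (simp only: powr_le_cancel_iff)
    then have "\<bar>x i\<bar> = b powr (- real (nat (- j)) / p)" using x_i by simp
    then show ?thesis ..
  qed
  then show ?thesis using that by metis
qed

lemma N_p_dual_vector_in_K_M:
  assumes "1 < p" "1 / p + 1 / q = 1" "1 < r" and x: "x \<in> N_p (real r powr (1 / p)) p"
  obtains w where "w \<in> K_M q r" "\<forall>i\<in>supp x. x i * w i = \<bar>x i\<bar> powr p"
proof (cases "supp x = {}")
  case True
  then show ?thesis using that K_M.unit_pos by blast
next
  case False
  have fin: "finite (supp x)" and lp: "lp_pow p x \<le> 1"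
    using x unfolding N_p_def N_set_def lp_ball_def c00_def by auto
  obtain k :: "nat \<Rightarrow> nat" where k: "\<forall>i\<in>supp x. \<bar>x i\<bar> = real r powr (- real (k i) / p)"
    using N_p_abs_eq_powr[OF x] assms(1,3) by auto
  have r_pow: "real r powr (- real n) = 1 / real r ^ n" for n
    using assms(3) by (simp add: powr_minus_divide powr_realpow)
  have pow_p: "\<bar>x i\<bar> powr p = 1 / real r ^ k i" if "i \<in> supp x" for i
  proof -
    have "\<bar>x i\<bar> powr p = real r powr (- real (k i) / p * p)"
      unfolding k[rule_format, OF that] powr_powr ..
    then show ?thesis using assms(1) r_pow by simp
  qed
  have dual: "\<bar>x i\<bar> * real r powr (- real (k i) / q) = \<bar>x i\<bar> powr p" if "i \<in> supp x" for i
  proof -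
    have "- real (k i) / p + - real (k i) / q = - real (k i) * (1 / p + 1 / q)"
      by (simp add: field_simps)
    then have "\<bar>x i\<bar> * real r powr (- real (k i) / q) = real r powr (- real (k i))"
      unfolding k[rule_format, OF that] powr_add[symmetric] using assms(2) by simp
    then show ?thesis using r_pow pow_p[OF that] by simp
  qed
  define M where "M = signed_unit_family x k (supp x)"
  have "(\<Sum>i\<in>supp x. 1 / real r ^ k i) \<le> 1"
    using lp pow_p unfolding lp_pow_def by simp
  then have "kraft_admissible q r M"
    unfolding M_def using fin False by (intro kraft_admissible_signed_unit_family) (auto simp: supp_def)
  then have "depth_weighted_sum q r M \<in> K_M q r"
    using assms(3) by (intro depth_weighted_sum_in_K_M) auto
  moreover have "x i * depth_weighted_sum q r M i = \<bar>x i\<bar> powr p" if i: "i \<in> supp x" for i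
    using depth_weighted_sum_signed_unit_family[OF fin i] dual[OF i] unfolding M_def
    by (simp add: abs_sgn mult.commute mult.left_commute)
  ultimately show ?thesis using that by blast
qed

lemma abs_sum_list_le_1_if_disjoint:
  assumes "\<forall>a<length ys. \<forall>b<length ys. a \<noteq> b \<longrightarrow> (ys ! a) i = 0 \<or> (ys ! b) i = 0"
    and "\<forall>y\<in>set ys. \<bar>y i\<bar> \<le> (1::real)"
  shows "\<bar>\<Sum>y\<leftarrow>ys. y i\<bar> \<le> 1"
  using assms
proof (induction ys)
  case Nil
  then show ?case by simp
next
  case (Cons z zs)
  note disjoint = Cons.prems(1)[rule_format]
  show ?case
  proof (cases "z i = 0")
    case True
    have "\<forall>a<length zs. \<forall>b<length zs. a \<noteq> b \<longrightarrow> (zs ! a) i = 0 \<or> (zs ! b) i = 0"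
      using disjoint[of "Suc a" "Suc b" for a b] by simp
    then show ?thesis using Cons True by simp
  next
    case False
    have "\<forall>y\<in>set zs. y i = 0"
      using disjoint[of 0 "Suc b" for b] False by (auto simp: in_set_conv_nth)
    then have "(\<Sum>y\<leftarrow>zs. y i) = 0" by (induction zs) auto
    then show ?thesis using Cons.prems(2) by simp
  qed
qed

lemma K_M_abs_le_1:
  assumes "y \<in> K_M q r" "0 \<le> q"
  shows "\<bar>y i\<bar> \<le> 1"
  using assms(1)
proof (induction arbitrary: i)
  case (unit_pos n)
  then show ?case by (simp add: unit_vec_def)
next
  case (unit_neg n)
  then show ?case by (simp add: unit_vec_def)
next
  case (comb ys)
  have "\<bar>\<Sum>y\<leftarrow>ys. y i\<bar> \<le> 1"
    using comb by (intro abs_sum_list_le_1_if_disjoint) auto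
  moreover have "real r powr (- 1 / q) \<le> 1"
    using comb(1,2) assms(2) powr_mono[of "- 1 / q" 0 "real r"] by simp
  ultimately show ?case by (simp add: abs_mult mult_le_one)
qed

lemma inner_le_pr_norm:
  assumes "w \<in> K_M q r" "0 \<le> q"
  shows "(\<Sum>i\<in>supp x. x i * w i) \<le> pr_norm q r x"
  unfolding pr_norm_def
proof (rule cSup_upper)
  show "(\<Sum>i\<in>supp x. x i * w i) \<in> {\<Sum>i\<in>supp x. x i * y i |y. y \<in> K_M q r}"
    using assms(1) by blast
  have "(\<Sum>i\<in>supp x. x i * y i) \<le> (\<Sum>i\<in>supp x. \<bar>x i\<bar>)" if "y \<in> K_M q r" for y
  proof (rule sum_mono)
    fix i
    have "\<bar>y i\<bar> \<le> 1" using K_M_abs_le_1[OF that assms(2)] .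
    have "x i * y i \<le> \<bar>x i\<bar> * \<bar>y i\<bar>" by (metis abs_ge_self abs_mult)
    also have "\<dots> \<le> \<bar>x i\<bar>" using \<open>\<bar>y i\<bar> \<le> 1\<close> by (simp add: mult_left_le)
    finally show "x i * y i \<le> \<bar>x i\<bar>" .
  qed
  then show "bdd_above {\<Sum>i\<in>supp x. x i * y i |y. y \<in> K_M q r}"
    by (intro bdd_aboveI[where M = "\<Sum>i\<in>supp x. \<bar>x i\<bar>"]) blast
qed

theorem mainTheorem3:
  fixes p q s :: real and r :: nat and x :: "nat \<Rightarrow> real"
  assumes "1 < p" and "1 < q" and "1 / p + 1 / q = 1"
    and "r > 1"
    and "s = real r powr (1 / p)"
    and "x \<in> N_p s p"
  shows "lp_pow p x \<le> pr_norm q r x"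
proof -
  obtain w where w: "w \<in> K_M q r" "\<forall>i\<in>supp x. x i * w i = \<bar>x i\<bar> powr p"
    using N_p_dual_vector_in_K_M[of p q r x] assms by blast
  have "lp_pow p x = (\<Sum>i\<in>supp x. x i * w i)"
    unfolding lp_pow_def using w(2) by simp
  also have "\<dots> \<le> pr_norm q r x"
    using inner_le_pr_norm[OF w(1)] assms(2) by simp
  finally show ?thesis .
qed

end
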